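(* Let $X$ be a topological space, $I$ a set, and $(\phi_i)_{i\in I}$, $(\psi_i)_{i\in I}$ uniformly bounded families of lower semicontinuous functions $X\to\mathbb{R}$. For $f\in X$ and $m\in\mathbb{N}$, $m\ge1$, define $\phi(f)=\sup_{i\in I}\phi_i(f)$, $\theta_m(f)=\sup_{i\in I}\big[\phi_i(f)+2^{-m}\psi_i(f)\big]$ and $\theta(f)=\sum_{m=1}^\infty2^{-m}\theta_m(f)$. If $(f_n)$ is a sequence converging to $f$ in $X$ with $\theta(f_n)\to\theta(f)$, then there is a sequence $(i_n)$ in $I$ such that $\phi_{i_n}(f)\to\phi(f)$, $\phi_{i_n}(f_n)\to\phi(f)$, $\phi(f_n)\to\phi(f)$, and $\psi_{i_n}(f_n)-\psi_{i_n}(f)\to0$ as $n\to\infty$. Moreover, if $I$ is equipped with a topology in which it is sequentially compact, then $(i_n)$ may be chosen to be convergent in that topology. *)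

theory Defs
  imports "HOL-Analysis.Analysis"
begin

definition lsc :: "('a::topological_space \<Rightarrow> real) \<Rightarrow> bool" where
  "lsc g \<longleftrightarrow> (\<forall>a. open {x. a < g x})"

definition seq_compact_space :: "'i topology \<Rightarrow> bool" where
  "seq_compact_space T \<longleftrightarrow>
     (\<forall>s. (\<forall>n. s n \<in> topspace T) \<longrightarrow>
        (\<exists>l (r::nat\<Rightarrow>nat). l \<in> topspace T \<and> strict_mono r \<and> limitin T (s \<circ> r) l sequentially))"

definition sup_fam :: "'i set \<Rightarrow> ('i \<Rightarrow> 'a \<Rightarrow> real) \<Rightarrow> 'a \<Rightarrow> real" where
  "sup_fam I \<phi> x = (SUP i\<in>I. \<phi> i x)"

definition theta_m :: "'i set \<Rightarrow> ('i \<Rightarrow> 'a \<Rightarrow> real) \<Rightarrow> ('i \<Rightarrow> 'a \<Rightarrow> real) \<Rightarrow> nat \<Rightarrow> 'a \<Rightarrow> real" where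
  "theta_m I \<phi> \<psi> m x = (SUP i\<in>I. \<phi> i x + (1/2)^m * \<psi> i x)"

definition theta :: "'i set \<Rightarrow> ('i \<Rightarrow> 'a \<Rightarrow> real) \<Rightarrow> ('i \<Rightarrow> 'a \<Rightarrow> real) \<Rightarrow> 'a \<Rightarrow> real" where
  "theta I \<phi> \<psi> x = (\<Sum>m. (1/2)^(Suc m) * theta_m I \<phi> \<psi> (Suc m) x)"

end

theory Submission
  imports Defs
begin

text \<open>Each \<open>theta_m\<close> is a supremum of lower semicontinuous functions, hence lower semicontinuous, so
  \<open>liminf theta_m(f\<^sub>n) \<ge> theta_m(f)\<close>. Since the \<open>theta_m\<close> are uniformly bounded and their weighted sum
  \<open>theta(f\<^sub>n)\<close> converges to \<open>theta(f)\<close>, no \<open>theta_m\<close> can jump up in the limit, so \<open>theta_m(f\<^sub>n) \<rightarrow>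
  theta_m(f)\<close> for every \<open>m\<close>. Now take \<open>i\<close> with \<open>\<phi>\<^sub>i(f) + 2\<^sup>-\<^sup>m \<psi>\<^sub>i(f)\<close> within \<open>4\<^sup>-\<^sup>m\<close> of
  \<open>theta_m(f)\<close>. As \<open>\<phi>\<^sub>i(f\<^sub>n) + 2\<^sup>-\<^sup>m \<psi>\<^sub>i(f\<^sub>n) \<le> theta_m(f\<^sub>n)\<close> while \<open>\<phi>\<^sub>i\<close> and \<open>\<psi>\<^sub>i\<close> can only
  jump up, for large \<open>n\<close> the value \<open>\<phi>\<^sub>i(f\<^sub>n)\<close> differs from \<open>\<phi>\<^sub>i(f)\<close> by \<open>O(4\<^sup>-\<^sup>m)\<close> and
  \<open>\<psi>\<^sub>i(f\<^sub>n)\<close> from \<open>\<psi>\<^sub>i(f)\<close> by \<open>O(2\<^sup>-\<^sup>m)\<close>, and \<open>\<phi>\<^sub>i(f)\<close> is within \<open>O(2\<^sup>-\<^sup>m)\<close> of \<open>\<phi>(f)\<close>.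
  Letting \<open>m\<close> grow slowly with \<open>n\<close> (a diagonal choice) yields \<open>(i\<^sub>n)\<close>; in the sequentially compact
  case the diagonal choice is made along a convergent subsequence of the near-maximizers.\<close>

lemma lsc_eventually_greater:
  assumes "lsc g" and "xs \<longlonglongrightarrow> x" and "a < g x"
  shows "eventually (\<lambda>n. a < g (xs n)) sequentially"
  using topological_tendstoD[OF assms(2), of "{y. a < g y}"] assms(1,3) unfolding lsc_def by auto

lemma lsc_add:
  assumes "lsc g" and "lsc h"
  shows "lsc (\<lambda>x. g x + h x)"
  unfolding lsc_def
proof
  fix a
  have "{x. a < g x + h x} = (\<Union>b. {x. b < g x} \<inter> {x. a - b < h x})"
  proof (intro equalityI subsetI)
    fix x assume "x \<in> {x. a < g x + h x}"
    then have "a < g x + h x" by simp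
    then have "g x - (g x + h x - a) / 2 < g x \<and> a - (g x - (g x + h x - a) / 2) < h x"
      by (auto simp: field_simps)
    then show "x \<in> (\<Union>b. {x. b < g x} \<inter> {x. a - b < h x})" by blast
  qed auto
  then show "open {x. a < g x + h x}"
    using assms unfolding lsc_def by (auto intro!: open_Int)
qed

lemma lsc_cmult:
  assumes "lsc g" and "0 \<le> c"
  shows "lsc (\<lambda>x. c * g x)"
proof (cases "c = 0")
  case False
  then have "{x. a < c * g x} = {x. a / c < g x}" for a
    using assms(2) by (auto simp: field_simps)
  then show ?thesis using assms(1) unfolding lsc_def by simp
qed (simp add: lsc_def)

lemma lsc_SUP:
  assumes "I \<noteq> {}" and "\<And>i. i \<in> I \<Longrightarrow> lsc (g i)"
    and "\<And>x. bdd_above ((\<lambda>i. g i x) ` I)"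
  shows "lsc (\<lambda>x. SUP i\<in>I. g i x)"
  unfolding lsc_def
proof
  fix a
  have "{x. a < (SUP i\<in>I. g i x)} = (\<Union>i\<in>I. {x. a < g i x})"
    using less_cSUP_iff[OF assms(1,3)] by auto
  then show "open {x. a < (SUP i\<in>I. g i x)}"
    using assms(2) unfolding lsc_def by auto
qed

lemma weighted_series_tendsto_zero:
  fixes a :: "nat \<Rightarrow> nat \<Rightarrow> real"
  assumes "\<And>k. 0 \<le> w k" and "summable w" and "\<And>k n. \<bar>a k n\<bar> \<le> C"
    and "\<And>k. (\<lambda>n. a k n) \<longlonglongrightarrow> 0"
  shows "(\<lambda>n. \<Sum>k. w k * a k n) \<longlonglongrightarrow> 0"
proof -
  have "(\<lambda>n. \<Sum>k. w k * a k n) \<longlonglongrightarrow> (\<Sum>k. 0)"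
  proof (rule tannerys_theorem[where M = "\<lambda>k. w k * C", THEN conjunct2, THEN conjunct2])
    show "(\<lambda>n. w k * a k n) \<longlonglongrightarrow> 0" for k
      by (rule tendsto_mult_right_zero[OF assms(4)])
    show "eventually (\<lambda>(k, n). norm (w k * a k n) \<le> w k * C) (at_top \<times>\<^sub>F sequentially)"
    proof (intro always_eventually allI, clarify)
      show "norm (w k * a k n) \<le> w k * C" for k n
        using assms(1,3) by (simp add: abs_mult mult_left_mono)
    qed
  qed (use assms(2) summable_mult2 in auto)
  then show ?thesis by simp
qed

text \<open>The negative parts of the terms tend to 0 by assumption, hence so does their weighted sum;
  the weighted sum of the positive parts then tends to 0 as well and dominates each
  of its nonnegative terms.\<close>
lemma weighted_series_termwise_tendsto_zero:
  fixes d :: "nat \<Rightarrow> nat \<Rightarrow> real"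
  assumes w_pos: "\<And>k. 0 < w k" and w_summable: "summable w"
    and d_bound: "\<And>k n. \<bar>d k n\<bar> \<le> C"
    and d_liminf: "\<And>k \<eta>. 0 < \<eta> \<Longrightarrow> eventually (\<lambda>n. - \<eta> < d k n) sequentially"
    and series_tendsto: "(\<lambda>n. \<Sum>k. w k * d k n) \<longlonglongrightarrow> 0"
  shows "(\<lambda>n. d m n) \<longlonglongrightarrow> 0"
proof -
  have summable_weighted: "summable (\<lambda>k. w k * x k)" if "\<And>k. \<bar>x k\<bar> \<le> C" for x
  proof (rule summable_comparison_test'[of "\<lambda>k. w k * C" 0])
    show "summable (\<lambda>k. w k * C)" using w_summable by (rule summable_mult2)
    show "norm (w k * x k) \<le> w k * C" for k
      using that[of k] w_pos[of k] by (simp add: abs_mult mult_left_mono)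
  qed
  define neg where "neg k n = max 0 (- d k n)" for k n
  define pos where "pos k n = d k n + neg k n" for k n
  have neg_bound: "\<bar>neg k n\<bar> \<le> C" and pos_bound: "\<bar>pos k n\<bar> \<le> C" for k n
    using d_bound[of k n] unfolding pos_def neg_def by auto
  have neg_tendsto: "(\<lambda>n. neg k n) \<longlonglongrightarrow> 0" for k
  proof (rule order_tendstoI)
    show "eventually (\<lambda>n. a < neg k n) sequentially" if "a < 0" for a
      using that unfolding neg_def by (auto intro!: always_eventually)
    show "eventually (\<lambda>n. neg k n < a) sequentially" if "0 < a" for a
      using d_liminf[OF that, of k] by (rule eventually_mono) (use that in \<open>auto simp: neg_def\<close>)
  qed
  have neg_series: "(\<lambda>n. \<Sum>k. w k * neg k n) \<longlonglongrightarrow> 0"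
    using w_pos w_summable neg_bound neg_tendsto
    by (intro weighted_series_tendsto_zero) (auto intro: less_imp_le)
  have pos_series: "(\<lambda>n. \<Sum>k. w k * pos k n) \<longlonglongrightarrow> 0"
  proof -
    have "(\<Sum>k. w k * pos k n) = (\<Sum>k. w k * d k n) + (\<Sum>k. w k * neg k n)" for n
      unfolding pos_def distrib_left
      by (rule suminf_add[symmetric]) (use summable_weighted d_bound neg_bound in auto)
    then show ?thesis
      using tendsto_add[OF series_tendsto neg_series] by simp
  qed
  have pos_nonneg: "0 \<le> pos k n" for k n
    unfolding pos_def neg_def by simp
  have "w m * pos m n \<le> (\<Sum>k. w k * pos k n)" for n
  proof -
    have "(\<Sum>k\<in>{m}. w k * pos k n) \<le> (\<Sum>k. w k * pos k n)"
      using summable_weighted[OF pos_bound]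
      by (intro sum_le_suminf) (auto intro!: mult_nonneg_nonneg less_imp_le[OF w_pos] pos_nonneg)
    then show ?thesis by simp
  qed
  moreover have "0 \<le> w m * pos m n" for n
    using w_pos[of m] pos_nonneg[of m n] by simp
  ultimately have "(\<lambda>n. w m * pos m n) \<longlonglongrightarrow> 0"
    by (intro real_tendsto_sandwich[OF _ _ tendsto_const pos_series]) auto
  then have "(\<lambda>n. pos m n) \<longlonglongrightarrow> 0"
    using tendsto_mult_left_iff[of "w m" "\<lambda>n. pos m n" 0] w_pos[of m] by simp
  from tendsto_diff[OF this neg_tendsto[of m]] show ?thesis
    unfolding pos_def by simp
qed

lemma eventually_diagonal_sequentially:
  fixes R :: "nat \<Rightarrow> nat \<Rightarrow> bool"
  assumes "\<And>k. eventually (R k) sequentially"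
  obtains kk where "filterlim kk at_top sequentially" and "eventually (\<lambda>n. R (kk n) n) sequentially"
proof -
  obtain N where N: "\<And>k n. N k \<le> n \<Longrightarrow> R k n"
    using assms unfolding eventually_sequentially by metis
  define Nm where "Nm k = (\<Sum>k'\<le>k. N k') + k" for k
  have N_le_Nm: "N k \<le> Nm k" for k
    unfolding Nm_def using member_le_sum[of k "{..k}" N] by auto
  have le_Nm: "k \<le> Nm k" for k
    unfolding Nm_def by auto
  define kk where "kk n = (GREATEST k. Nm k \<le> n)" for n
  have Nm_kk_le: "Nm (kk n) \<le> n" if "Nm 0 \<le> n" for n
    unfolding kk_def by (rule GreatestI_nat[of _ 0 n]) (use that le_Nm order_trans in auto)
  have le_kk: "K \<le> kk n" if "Nm K \<le> n" for n K
    unfolding kk_def by (rule Greatest_le_nat[of _ K n]) (use that le_Nm order_trans in auto)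
  show ?thesis
  proof
    show "filterlim kk at_top sequentially"
      unfolding filterlim_at_top eventually_sequentially using le_kk by blast
    show "eventually (\<lambda>n. R (kk n) n) sequentially"
      unfolding eventually_sequentially
      by (rule exI[of _ "Nm 0"]) (auto intro!: N intro: order_trans[OF N_le_Nm Nm_kk_le])
  qed
qed

lemma limitin_compose_at_top:
  assumes "limitin T x l sequentially" and "filterlim kk at_top sequentially"
  shows "limitin T (\<lambda>n. x (kk n)) l sequentially"
  using assms unfolding limitin_def filterlim_iff by auto

definition asymptotic_maximizers ::
    "'i set \<Rightarrow> ('i \<Rightarrow> 'a \<Rightarrow> real) \<Rightarrow> ('i \<Rightarrow> 'a \<Rightarrow> real) \<Rightarrow> (nat \<Rightarrow> 'a) \<Rightarrow> 'a \<Rightarrow> (nat \<Rightarrow> 'i) \<Rightarrow> bool"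
  where "asymptotic_maximizers I \<phi> \<psi> fs f idx \<longleftrightarrow>
    (\<forall>n. idx n \<in> I)
    \<and> (\<lambda>n. \<phi> (idx n) f) \<longlonglongrightarrow> sup_fam I \<phi> f
    \<and> (\<lambda>n. \<phi> (idx n) (fs n)) \<longlonglongrightarrow> sup_fam I \<phi> f
    \<and> (\<lambda>n. \<psi> (idx n) (fs n) - \<psi> (idx n) f) \<longlonglongrightarrow> 0"

locale bounded_lsc_families =
  fixes I :: "'i set" and \<phi> \<psi> :: "'i \<Rightarrow> 'a::topological_space \<Rightarrow> real" and B :: real
  assumes index_nonempty: "I \<noteq> {}"
    and lsc_phi_i: "\<And>i. i \<in> I \<Longrightarrow> lsc (\<phi> i)"
    and lsc_psi_i: "\<And>i. i \<in> I \<Longrightarrow> lsc (\<psi> i)"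
    and abs_phi_le: "\<And>i x. i \<in> I \<Longrightarrow> \<bar>\<phi> i x\<bar> \<le> B"
    and abs_psi_le: "\<And>i x. i \<in> I \<Longrightarrow> \<bar>\<psi> i x\<bar> \<le> B"
begin

lemma bound_nonneg: "0 \<le> B"
  using index_nonempty abs_phi_le by force

lemma abs_weighted_psi_le: "i \<in> I \<Longrightarrow> \<bar>(1/2)^m * \<psi> i x\<bar> \<le> (1/2)^m * B"
  using abs_psi_le[of i x] by (simp add: abs_mult mult_left_mono)

lemma weighted_bound_le: "(1/2)^m * B \<le> B"
  using bound_nonneg by (simp add: mult_left_le_one_le power_le_one)

lemma bdd_above_phi: "bdd_above ((\<lambda>i. \<phi> i x) ` I)"
  using abs_phi_le by (intro bdd_aboveI2[of _ _ B]) (auto simp: abs_le_iff)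

lemma theta_term_le: "i \<in> I \<Longrightarrow> \<phi> i x + (1/2)^m * \<psi> i x \<le> 2 * B"
  using abs_phi_le[of i x] abs_weighted_psi_le[of i m x] weighted_bound_le[of m]
  unfolding abs_le_iff by linarith

lemma bdd_above_theta_terms: "bdd_above ((\<lambda>i. \<phi> i x + (1/2)^m * \<psi> i x) ` I)"
  using theta_term_le by (intro bdd_aboveI2)

lemma phi_le_sup_fam:
  assumes "i \<in> I" shows "\<phi> i x \<le> sup_fam I \<phi> x"
  unfolding sup_fam_def by (rule cSUP_upper[OF assms bdd_above_phi])

lemma theta_term_le_theta_m:
  assumes "i \<in> I" shows "\<phi> i x + (1/2)^m * \<psi> i x \<le> theta_m I \<phi> \<psi> m x"
  unfolding theta_m_def by (rule cSUP_upper[OF assms bdd_above_theta_terms])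

lemma theta_m_le_sup_fam: "theta_m I \<phi> \<psi> m x \<le> sup_fam I \<phi> x + (1/2)^m * B"
  unfolding theta_m_def
proof (rule cSUP_least[OF index_nonempty])
  fix i assume "i \<in> I"
  then show "\<phi> i x + (1/2)^m * \<psi> i x \<le> sup_fam I \<phi> x + (1/2)^m * B"
    using phi_le_sup_fam[of i x] abs_weighted_psi_le[of i m x] unfolding abs_le_iff by linarith
qed

lemma sup_fam_le_theta_m: "sup_fam I \<phi> x \<le> theta_m I \<phi> \<psi> m x + (1/2)^m * B"
  unfolding sup_fam_def
proof (rule cSUP_least[OF index_nonempty])
  fix i assume "i \<in> I"
  then show "\<phi> i x \<le> theta_m I \<phi> \<psi> m x + (1/2)^m * B"
    using theta_term_le_theta_m[of i x m] abs_weighted_psi_le[of i m x]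
    unfolding abs_le_iff by linarith
qed

lemma abs_theta_m_le: "\<bar>theta_m I \<phi> \<psi> m x\<bar> \<le> 2 * B"
proof -
  obtain i where i: "i \<in> I" using index_nonempty by blast
  have "theta_m I \<phi> \<psi> m x \<le> 2 * B"
    unfolding theta_m_def using theta_term_le by (intro cSUP_least index_nonempty)
  moreover have "- (2 * B) \<le> theta_m I \<phi> \<psi> m x"
    using theta_term_le_theta_m[OF i, of x m] abs_phi_le[OF i, of x]
      abs_weighted_psi_le[OF i, of m x] weighted_bound_le[of m]
    unfolding abs_le_iff by linarith
  ultimately show ?thesis by auto
qed

lemma lsc_sup_fam: "lsc (sup_fam I \<phi>)"
  unfolding sup_fam_def[abs_def] using index_nonempty lsc_phi_i bdd_above_phi by (rule lsc_SUP)

lemma lsc_theta_m: "lsc (theta_m I \<phi> \<psi> m)"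
  unfolding theta_m_def[abs_def] using index_nonempty _ bdd_above_theta_terms
  by (rule lsc_SUP) (simp add: lsc_add lsc_cmult lsc_phi_i lsc_psi_i)

lemma summable_theta_series: "summable (\<lambda>m. (1/2)^Suc m * theta_m I \<phi> \<psi> (Suc m) x)"
proof (rule summable_comparison_test'[of "\<lambda>m. 2 * B * (1/2)^Suc m" 0])
  show "summable (\<lambda>m. 2 * B * ((1::real)/2)^Suc m)"
    by (intro summable_mult) simp
  show "norm ((1/2)^Suc m * theta_m I \<phi> \<psi> (Suc m) x) \<le> 2 * B * (1/2)^Suc m" for m
    using abs_theta_m_le[of "Suc m" x] by (simp add: abs_mult mult.commute)
qed

end

locale theta_convergent = bounded_lsc_families I \<phi> \<psi> B
  for I :: "'i set" and \<phi> \<psi> :: "'i \<Rightarrow> 'a::topological_space \<Rightarrow> real" and B :: real +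
  fixes fs :: "nat \<Rightarrow> 'a" and f :: 'a
  assumes fs_tendsto: "fs \<longlonglongrightarrow> f"
    and theta_tendsto: "(\<lambda>n. theta I \<phi> \<psi> (fs n)) \<longlonglongrightarrow> theta I \<phi> \<psi> f"
begin

text \<open>Lower semicontinuity bounds every \<open>theta_m\<close> from below along \<open>fs\<close>; since the weighted sum
  of the \<open>theta_m\<close> converges, none of them can jump up in the limit.\<close>
lemma theta_m_tendsto:
  assumes "0 < m"
  shows "(\<lambda>n. theta_m I \<phi> \<psi> m (fs n)) \<longlonglongrightarrow> theta_m I \<phi> \<psi> m f"
proof -
  obtain k where m: "m = Suc k" using assms gr0_conv_Suc by blast
  define d where "d l n = theta_m I \<phi> \<psi> (Suc l) (fs n) - theta_m I \<phi> \<psi> (Suc l) f" for l n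
  have "(\<lambda>n. d k n) \<longlonglongrightarrow> 0"
  proof (rule weighted_series_termwise_tendsto_zero[where w = "\<lambda>k. (1/2)^Suc k" and C = "4 * B"])
    show "summable (\<lambda>k. (1/2::real)^Suc k)" by simp
    show "\<bar>d k n\<bar> \<le> 4 * B" for k n
      using abs_theta_m_le[of "Suc k" "fs n"] abs_theta_m_le[of "Suc k" f] unfolding d_def by linarith
    show "eventually (\<lambda>n. - \<eta> < d k n) sequentially" if "0 < \<eta>" for k \<eta>
      using lsc_eventually_greater[OF lsc_theta_m[of "Suc k"] fs_tendsto, of "theta_m I \<phi> \<psi> (Suc k) f - \<eta>"] that
      unfolding d_def by (auto elim: eventually_mono)
    have "(\<Sum>k. (1/2)^Suc k * d k n) = theta I \<phi> \<psi> (fs n) - theta I \<phi> \<psi> f" for n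
      unfolding theta_def d_def right_diff_distrib
      using suminf_diff[OF summable_theta_series summable_theta_series] by simp
    then show "(\<lambda>n. \<Sum>k. (1/2)^Suc k * d k n) \<longlonglongrightarrow> 0"
      using LIM_zero[OF theta_tendsto] by simp
  qed simp
  then show ?thesis
    unfolding m d_def by (rule LIM_zero_cancel)
qed

text \<open>The lower half is lower semicontinuity; the upper half holds because \<open>sup_fam\<close> is uniformly
  \<open>2\<^sup>-\<^sup>m B\<close>-close to \<open>theta_m\<close>.\<close>
lemma sup_fam_tendsto: "(\<lambda>n. sup_fam I \<phi> (fs n)) \<longlonglongrightarrow> sup_fam I \<phi> f"
proof (rule order_tendstoI)
  fix a assume "a < sup_fam I \<phi> f"
  then show "eventually (\<lambda>n. a < sup_fam I \<phi> (fs n)) sequentially"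
    by (rule lsc_eventually_greater[OF lsc_sup_fam fs_tendsto])
next
  fix a assume a: "sup_fam I \<phi> f < a"
  have "0 < (a - sup_fam I \<phi> f) / (2 * B + 1)"
    using a bound_nonneg by simp
  then obtain k where "(1/2::real)^k < (a - sup_fam I \<phi> f) / (2 * B + 1)"
    using real_arch_pow_inv[of _ "1/2::real"] by auto
  then have "(1/2::real)^k * (2 * B + 1) < a - sup_fam I \<phi> f"
    using bound_nonneg by (simp add: pos_less_divide_eq)
  define \<epsilon> where "\<epsilon> = (1/2::real)^Suc k"
  have "\<epsilon> * (2 * B + 1) \<le> (1/2::real)^k * (2 * B + 1)"
    unfolding \<epsilon>_def using bound_nonneg by (intro mult_right_mono) auto
  with \<open>(1/2::real)^k * (2 * B + 1) < a - sup_fam I \<phi> f\<close>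
  have small: "2 * (\<epsilon> * B) + \<epsilon> < a - sup_fam I \<phi> f"
    by (simp add: algebra_simps)
  have theta_f: "theta_m I \<phi> \<psi> (Suc k) f \<le> sup_fam I \<phi> f + \<epsilon> * B"
    unfolding \<epsilon>_def by (rule theta_m_le_sup_fam)
  show "eventually (\<lambda>n. sup_fam I \<phi> (fs n) < a) sequentially"
    using order_tendstoD(2)[OF theta_m_tendsto, of "Suc k" "theta_m I \<phi> \<psi> (Suc k) f + \<epsilon>"]
  proof (rule eventually_mono)
    fix n assume "theta_m I \<phi> \<psi> (Suc k) (fs n) < theta_m I \<phi> \<psi> (Suc k) f + \<epsilon>"
    moreover have "sup_fam I \<phi> (fs n) \<le> theta_m I \<phi> \<psi> (Suc k) (fs n) + \<epsilon> * B"
      unfolding \<epsilon>_def by (rule sup_fam_le_theta_m)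
    ultimately show "sup_fam I \<phi> (fs n) < a"
      using small theta_f by linarith
  qed (simp_all add: \<epsilon>_def)
qed

text \<open>An \<open>\<epsilon>\<^sup>2\<close>-maximizer \<open>j\<close> of \<open>theta_m\<close> at \<open>f\<close>, \<open>\<epsilon> = 2\<^sup>-\<^sup>m\<close>: as \<open>theta_m\<close> cannot jump up along \<open>fs\<close>
  while \<open>\<phi> j\<close> and \<open>\<psi> j\<close> cannot jump down, \<open>\<phi> j + \<epsilon> \<psi> j\<close> moves by \<open>O(\<epsilon>\<^sup>2)\<close>, so \<open>\<phi> j\<close> moves by
  \<open>O(\<epsilon>\<^sup>2)\<close> and \<open>\<psi> j\<close> by \<open>O(\<epsilon>)\<close>.\<close>
lemma near_maximizer:
  assumes "0 < m"
  shows "\<exists>j\<in>I. \<bar>\<phi> j f - sup_fam I \<phi> f\<bar> \<le> (3 + 2 * B) * (1/2)^m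
    \<and> eventually (\<lambda>n. \<bar>\<phi> j (fs n) - \<phi> j f\<bar> \<le> (3 + 2 * B) * (1/2)^m
                      \<and> \<bar>\<psi> j (fs n) - \<psi> j f\<bar> \<le> (3 + 2 * B) * (1/2)^m) sequentially"
proof -
  define \<epsilon> :: real where "\<epsilon> = (1/2)^m"
  have \<epsilon>: "0 < \<epsilon>" "\<epsilon> \<le> 1"
    unfolding \<epsilon>_def by (auto intro: power_le_one)
  have "\<epsilon> * \<epsilon> \<le> \<epsilon>" and "3 * \<epsilon> \<le> (3 + 2 * B) * \<epsilon>"
    using \<epsilon> bound_nonneg by (auto intro: mult_left_le_one_le)
  moreover have "(3 + 2 * B) * \<epsilon> = 3 * \<epsilon> + 2 * (\<epsilon> * B)"
    by (simp add: algebra_simps)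
  ultimately have err: "\<epsilon> * \<epsilon> \<le> \<epsilon>" "3 * \<epsilon> \<le> (3 + 2 * B) * \<epsilon>" "\<epsilon> + 2 * (\<epsilon> * B) \<le> (3 + 2 * B) * \<epsilon>"
    using \<epsilon> by linarith+
  have "theta_m I \<phi> \<psi> m f - \<epsilon> * \<epsilon> < theta_m I \<phi> \<psi> m f"
    using \<epsilon> by simp
  then obtain j where j: "j \<in> I" and near: "theta_m I \<phi> \<psi> m f - \<epsilon> * \<epsilon> < \<phi> j f + \<epsilon> * \<psi> j f"
    unfolding theta_m_def less_cSUP_iff[OF index_nonempty bdd_above_theta_terms] \<epsilon>_def by blast
  have theta_m_upper: "\<phi> j x + \<epsilon> * \<psi> j x \<le> theta_m I \<phi> \<psi> m x" for x
    unfolding \<epsilon>_def by (rule theta_term_le_theta_m[OF j])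
  have "\<bar>\<phi> j f - sup_fam I \<phi> f\<bar> \<le> (3 + 2 * B) * \<epsilon>"
  proof -
    have "\<phi> j f \<le> sup_fam I \<phi> f"
      using j by (rule phi_le_sup_fam)
    moreover have "sup_fam I \<phi> f \<le> theta_m I \<phi> \<psi> m f + \<epsilon> * B"
      unfolding \<epsilon>_def by (rule sup_fam_le_theta_m)
    moreover have "\<bar>\<epsilon> * \<psi> j f\<bar> \<le> \<epsilon> * B"
      unfolding \<epsilon>_def using j by (rule abs_weighted_psi_le)
    ultimately show ?thesis
      using near err unfolding abs_le_iff by linarith
  qed
  moreover have "eventually (\<lambda>n. \<bar>\<phi> j (fs n) - \<phi> j f\<bar> \<le> (3 + 2 * B) * \<epsilon>
                       \<and> \<bar>\<psi> j (fs n) - \<psi> j f\<bar> \<le> (3 + 2 * B) * \<epsilon>) sequentially"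
  proof -
    have "eventually (\<lambda>n. \<phi> j f - \<epsilon> * \<epsilon> < \<phi> j (fs n)) sequentially"
      using \<epsilon> by (intro lsc_eventually_greater[OF lsc_phi_i[OF j] fs_tendsto]) simp
    moreover have "eventually (\<lambda>n. \<psi> j f - \<epsilon> < \<psi> j (fs n)) sequentially"
      using \<epsilon> by (intro lsc_eventually_greater[OF lsc_psi_i[OF j] fs_tendsto]) simp
    moreover have "eventually (\<lambda>n. theta_m I \<phi> \<psi> m (fs n) < theta_m I \<phi> \<psi> m f + \<epsilon> * \<epsilon>) sequentially"
      using \<epsilon> assms by (intro order_tendstoD(2)[OF theta_m_tendsto]) simp_all
    ultimately show ?thesis
    proof eventually_elim
      case (elim n)
      note step = elim theta_m_upper[of "fs n"] near
      have "\<epsilon> * (\<psi> j (fs n) - \<psi> j f) < \<epsilon> * (3 * \<epsilon>)"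
        using step by (simp add: algebra_simps)
      then have psi_up: "\<psi> j (fs n) - \<psi> j f < 3 * \<epsilon>"
        using \<epsilon> by simp
      have "\<epsilon> * (\<psi> j f - \<psi> j (fs n)) < \<epsilon> * \<epsilon>"
        using elim(2) \<epsilon> by (intro mult_strict_left_mono) auto
      then have phi_up: "\<phi> j (fs n) - \<phi> j f < 3 * (\<epsilon> * \<epsilon>)"
        using step by (simp add: algebra_simps)
      show ?case
        using psi_up phi_up elim(1,2) err \<epsilon> unfolding abs_le_iff by (intro conjI) linarith+
    qed
  qed
  ultimately show ?thesis
    using j unfolding \<epsilon>_def by blast
qed

lemma asymptotic_maximizers_diagonal:
  assumes j_in: "\<And>k. j k \<in> I" and e_tendsto: "e \<longlonglongrightarrow> 0"
    and at_f: "\<And>k. \<bar>\<phi> (j k) f - sup_fam I \<phi> f\<bar> \<le> e k"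
    and along_fs: "\<And>k. eventually (\<lambda>n. \<bar>\<phi> (j k) (fs n) - \<phi> (j k) f\<bar> \<le> e k
                                  \<and> \<bar>\<psi> (j k) (fs n) - \<psi> (j k) f\<bar> \<le> e k) sequentially"
  shows "\<exists>kk. filterlim kk at_top sequentially \<and> asymptotic_maximizers I \<phi> \<psi> fs f (\<lambda>n. j (kk n))"
proof -
  obtain kk where kk: "filterlim kk at_top sequentially"
    and diag: "eventually (\<lambda>n. \<bar>\<phi> (j (kk n)) (fs n) - \<phi> (j (kk n)) f\<bar> \<le> e (kk n)
                            \<and> \<bar>\<psi> (j (kk n)) (fs n) - \<psi> (j (kk n)) f\<bar> \<le> e (kk n)) sequentially"
    by (rule eventually_diagonal_sequentially[where R = "\<lambda>k n. \<bar>\<phi> (j k) (fs n) - \<phi> (j k) f\<bar> \<le> e k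
                                  \<and> \<bar>\<psi> (j k) (fs n) - \<psi> (j k) f\<bar> \<le> e k", OF along_fs])
  have e_kk: "(\<lambda>n. e (kk n)) \<longlonglongrightarrow> 0"
    by (rule filterlim_compose[OF e_tendsto kk])
  have phi_f: "(\<lambda>n. \<phi> (j (kk n)) f) \<longlonglongrightarrow> sup_fam I \<phi> f"
    by (rule LIM_zero_cancel, rule Lim_null_comparison[OF _ e_kk]) (simp add: at_f)
  have phi_fs: "(\<lambda>n. \<phi> (j (kk n)) (fs n)) \<longlonglongrightarrow> sup_fam I \<phi> f"
  proof (rule LIM_zero_cancel, rule Lim_null_comparison)
    show "eventually (\<lambda>n. norm (\<phi> (j (kk n)) (fs n) - sup_fam I \<phi> f) \<le> 2 * e (kk n)) sequentially"
      using diag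
    proof (rule eventually_mono)
      fix n
      assume "\<bar>\<phi> (j (kk n)) (fs n) - \<phi> (j (kk n)) f\<bar> \<le> e (kk n)
              \<and> \<bar>\<psi> (j (kk n)) (fs n) - \<psi> (j (kk n)) f\<bar> \<le> e (kk n)"
      with at_f[of "kk n"] show "norm (\<phi> (j (kk n)) (fs n) - sup_fam I \<phi> f) \<le> 2 * e (kk n)"
        unfolding real_norm_def by arith
    qed
    show "(\<lambda>n. 2 * e (kk n)) \<longlonglongrightarrow> 0"
      by (rule tendsto_mult_right_zero[OF e_kk])
  qed
  have psi: "(\<lambda>n. \<psi> (j (kk n)) (fs n) - \<psi> (j (kk n)) f) \<longlonglongrightarrow> 0"
    by (rule Lim_null_comparison[OF _ e_kk]) (use diag in \<open>simp add: eventually_conj_iff\<close>)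
  show ?thesis
    using kk j_in phi_f phi_fs psi unfolding asymptotic_maximizers_def by blast
qed

lemma near_maximizer_sequence:
  obtains j :: "nat \<Rightarrow> 'i" where "\<And>k. j k \<in> I"
    and "\<And>r :: nat \<Rightarrow> nat. strict_mono r \<Longrightarrow> \<exists>kk. filterlim kk at_top sequentially
                            \<and> asymptotic_maximizers I \<phi> \<psi> fs f (\<lambda>n. j (r (kk n)))"
proof -
  define e where "e k = (3 + 2 * B) * (1/2::real)^Suc k" for k
  define near where "near k j \<longleftrightarrow> j \<in> I \<and> \<bar>\<phi> j f - sup_fam I \<phi> f\<bar> \<le> e k
      \<and> eventually (\<lambda>n. \<bar>\<phi> j (fs n) - \<phi> j f\<bar> \<le> e k \<and> \<bar>\<psi> j (fs n) - \<psi> j f\<bar> \<le> e k) sequentially"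
    for k j
  have "\<forall>k. \<exists>j. near k j"
    unfolding near_def e_def using near_maximizer by blast
  then obtain j where j: "\<And>k. near k (j k)"
    by (blast dest: choice)
  have "(\<lambda>k. (1/2::real)^k) \<longlonglongrightarrow> 0"
    by (rule LIMSEQ_power_zero) simp
  then have "(\<lambda>k. (1/2::real)^Suc k) \<longlonglongrightarrow> 0"
    by (rule LIMSEQ_Suc)
  then have e: "e \<longlonglongrightarrow> 0"
    unfolding e_def by (rule tendsto_mult_right_zero)
  show ?thesis
  proof (rule that)
    show "j k \<in> I" for k
      using j unfolding near_def by blast
    fix r :: "nat \<Rightarrow> nat" assume r: "strict_mono r"
    have "\<exists>kk. filterlim kk at_top sequentially
            \<and> asymptotic_maximizers I \<phi> \<psi> fs f (\<lambda>n. (j \<circ> r) (kk n))"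
    proof (rule asymptotic_maximizers_diagonal[of "j \<circ> r" "e \<circ> r"])
      show "(e \<circ> r) \<longlonglongrightarrow> 0"
        by (rule LIMSEQ_subseq_LIMSEQ[OF e r])
    qed (use j in \<open>simp_all add: near_def\<close>)
    then show "\<exists>kk. filterlim kk at_top sequentially
                  \<and> asymptotic_maximizers I \<phi> \<psi> fs f (\<lambda>n. j (r (kk n)))"
      by simp
  qed
qed

end

theorem proposition1p2:
  fixes I :: "'i set"
    and \<phi> \<psi> :: "'i \<Rightarrow> 'a::topological_space \<Rightarrow> real"
    and fs :: "nat \<Rightarrow> 'a" and f :: 'a
  assumes I_ne: "I \<noteq> {}"
    and lsc_phi: "\<forall>i\<in>I. lsc (\<phi> i)"
    and lsc_psi: "\<forall>i\<in>I. lsc (\<psi> i)"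
    and bdd_phi: "\<exists>B. \<forall>i\<in>I. \<forall>x. \<bar>\<phi> i x\<bar> \<le> B"
    and bdd_psi: "\<exists>B. \<forall>i\<in>I. \<forall>x. \<bar>\<psi> i x\<bar> \<le> B"
    and conv: "fs \<longlonglongrightarrow> f"
    and theta_conv: "(\<lambda>n. theta I \<phi> \<psi> (fs n)) \<longlonglongrightarrow> theta I \<phi> \<psi> f"
  shows "(\<exists>idx. (\<forall>n. idx n \<in> I)
            \<and> (\<lambda>n. \<phi> (idx n) f) \<longlonglongrightarrow> sup_fam I \<phi> f
            \<and> (\<lambda>n. \<phi> (idx n) (fs n)) \<longlonglongrightarrow> sup_fam I \<phi> f
            \<and> (\<lambda>n. sup_fam I \<phi> (fs n)) \<longlonglongrightarrow> sup_fam I \<phi> f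
            \<and> (\<lambda>n. \<psi> (idx n) (fs n) - \<psi> (idx n) f) \<longlonglongrightarrow> 0)
       \<and> (\<forall>T :: 'i topology. topspace T = I \<and> seq_compact_space T \<longrightarrow>
           (\<exists>idx. (\<forall>n. idx n \<in> I)
            \<and> (\<lambda>n. \<phi> (idx n) f) \<longlonglongrightarrow> sup_fam I \<phi> f
            \<and> (\<lambda>n. \<phi> (idx n) (fs n)) \<longlonglongrightarrow> sup_fam I \<phi> f
            \<and> (\<lambda>n. sup_fam I \<phi> (fs n)) \<longlonglongrightarrow> sup_fam I \<phi> f
            \<and> (\<lambda>n. \<psi> (idx n) (fs n) - \<psi> (idx n) f) \<longlonglongrightarrow> 0
            \<and> (\<exists>l. limitin T idx l sequentially)))"
proof -
  obtain B\<^sub>\<phi> where B\<^sub>\<phi>: "\<forall>i\<in>I. \<forall>x. \<bar>\<phi> i x\<bar> \<le> B\<^sub>\<phi>" using bdd_phi by blast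
  obtain B\<^sub>\<psi> where B\<^sub>\<psi>: "\<forall>i\<in>I. \<forall>x. \<bar>\<psi> i x\<bar> \<le> B\<^sub>\<psi>" using bdd_psi by blast
  interpret lim: theta_convergent I \<phi> \<psi> "max B\<^sub>\<phi> B\<^sub>\<psi>" fs f
    by unfold_locales
      (use I_ne lsc_phi lsc_psi B\<^sub>\<phi> B\<^sub>\<psi> conv theta_conv in \<open>auto simp: le_max_iff_disj\<close>)
  obtain j where j: "\<And>k. j k \<in> I"
    and diagonal: "\<And>r :: nat \<Rightarrow> nat. strict_mono r \<Longrightarrow> \<exists>kk. filterlim kk at_top sequentially
                            \<and> asymptotic_maximizers I \<phi> \<psi> fs f (\<lambda>n. j (r (kk n)))"
    using lim.near_maximizer_sequence by blast
  have unrestricted: "\<exists>idx. asymptotic_maximizers I \<phi> \<psi> fs f idx"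
    using diagonal[OF strict_mono_id] by auto
  have convergent: "\<exists>idx. asymptotic_maximizers I \<phi> \<psi> fs f idx \<and> (\<exists>l. limitin T idx l sequentially)"
    if topspace: "topspace T = I" and compact: "seq_compact_space T" for T :: "'i topology"
  proof -
    obtain l and r :: "nat \<Rightarrow> nat" where r: "strict_mono r" and lim_r: "limitin T (j \<circ> r) l sequentially"
      using topspace compact j unfolding seq_compact_space_def by blast
    obtain kk where kk: "filterlim kk at_top sequentially"
      and "asymptotic_maximizers I \<phi> \<psi> fs f (\<lambda>n. j (r (kk n)))"
      using diagonal[OF r] by blast
    moreover have "limitin T (\<lambda>n. j (r (kk n))) l sequentially"
      using limitin_compose_at_top[OF lim_r kk] by (simp add: o_def)
    ultimately show ?thesis by blast
  qed
  show ?thesis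
    using unrestricted convergent lim.sup_fam_tendsto unfolding asymptotic_maximizers_def by blast
qed

end
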